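(* Let $n\ge2$ and $B\in\mathrm{M}_n(E_1)$ with $\mathrm{tr}(B^t)=0$ for all $1\le t\le 2n-2$. Then $nB^{2n-1}=\mathrm{tr}(B^{2n-1})I_n$; in particular $B^{2n-1}$ is a scalar matrix. If moreover $\mathrm{tr}(B^{2n-1})=0$, then $B^{2n-1}=0$.
   Context: $K$ is a field of characteristic zero. $E$ is the infinite-dimensional Grassmann (exterior) algebra over $K$, generated by countably many indeterminates $v_1,v_2,\dots$ subject to $v_iv_j+v_jv_i=0$ for all $i,j$. $E=E_0\oplus E_1$ is its natural $\mathbb{Z}_2$-grading: $E_0$ (resp. $E_1$) is the $K$-span of products of an even (resp. odd) number of generators. $\mathrm{M}_n(E_1)$ denotes the $n\times n$ matrices with entries in $E_1$, $I_n$ the identity matrix, $\mathrm{tr}$ the sum of diagonal entries. *)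

theory Defs
  imports Main
begin

text \<open>The infinite Grassmann algebra E over a field 'a, generated by v_0, v_1, ...
  An element is represented by its coefficient function on monomials:
  f S is the coefficient of v_S = v_{s1} ... v_{sk} (s1 < ... < sk) for a finite S.\<close>

type_synonym 'a grass = "nat set \<Rightarrow> 'a"

definition grass :: "'a::zero grass \<Rightarrow> bool" where
  "grass f \<longleftrightarrow> finite {S. f S \<noteq> 0} \<and> (\<forall>S. f S \<noteq> 0 \<longrightarrow> finite S)"

definition grass_odd :: "'a::zero grass \<Rightarrow> bool" where
  "grass_odd f \<longleftrightarrow> grass f \<and> (\<forall>S. f S \<noteq> 0 \<longrightarrow> odd (card S))"

text \<open>Sign with v_S v_T = gsign S T v_{S \<union> T} for disjoint S, T (number of inversions).\<close>
definition gsign :: "nat set \<Rightarrow> nat set \<Rightarrow> 'a::ring_1" where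
  "gsign S T = (if even (card {(s,t). s \<in> S \<and> t \<in> T \<and> t < s}) then 1 else -1)"

definition gmult :: "'a::ring_1 grass \<Rightarrow> 'a grass \<Rightarrow> 'a grass" where
  "gmult f g = (\<lambda>U. \<Sum>S\<in>{S. S \<subseteq> U}. gsign S (U - S) * f S * g (U - S))"

definition gzero :: "'a::zero grass" where
  "gzero = (\<lambda>_. 0)"

text \<open>n x n matrices over E, as functions on indices (only entries i, j < n matter).\<close>
type_synonym 'a gmat = "nat \<Rightarrow> nat \<Rightarrow> 'a grass"

definition gmat_mult :: "nat \<Rightarrow> 'a::ring_1 gmat \<Rightarrow> 'a gmat \<Rightarrow> 'a gmat" where
  "gmat_mult n A B = (\<lambda>i j U. \<Sum>k<n. gmult (A i k) (B k j) U)"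

definition gmat_one :: "'a::ring_1 gmat" where
  "gmat_one = (\<lambda>i j U. if i = j \<and> U = {} then 1 else 0)"

fun gmat_pow :: "nat \<Rightarrow> 'a::ring_1 gmat \<Rightarrow> nat \<Rightarrow> 'a gmat" where
  "gmat_pow n A 0 = gmat_one"
| "gmat_pow n A (Suc t) = gmat_mult n A (gmat_pow n A t)"

definition gtrace :: "nat \<Rightarrow> 'a::ring_1 gmat \<Rightarrow> 'a grass" where
  "gtrace n A = (\<lambda>U. \<Sum>i<n. A i i U)"

end

theory Submission
  imports Defs "Jordan_Normal_Form.Char_Poly" "HOL-Computational_Algebra.Polynomial_FPS"
begin

text \<open>
  For an odd matrix B the entries of B^2 lie in the commutative even part of E. Adjoin a
  Grassmann generator \<theta> that does not occur in B: then D = B^2 + \<theta> B again has even entries,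
  and since \<theta> anticommutes with the entries of B and \<theta>^2 = 0, its powers are
  D^k = B^(2k) + k \<theta> B^(2k-1). The hypotheses therefore give tr(D^k) = 0 for 1 \<le> k < n.
  Over a commutative ring without additive torsion, vanishing of these traces forces
  n D^n = tr(D^n) I; this trace form of the Cayley-Hamilton theorem is proved via the
  adjugate of xI - A together with Jacobi's formula \<chi>' = tr adj(xI - A). Comparing the
  \<theta>-components of n D^n = tr(D^n) I yields n^2 B^(2n-1) = n tr(B^(2n-1)) I.
\<close>

section \<open>Derivations and Jacobi's formula\<close>

locale derivation =
  fixes D :: "'a::comm_ring_1 \<Rightarrow> 'a"
  assumes derivation_add: "D (x + y) = D x + D y"
    and derivation_mult: "D (x * y) = x * D y + y * D x"
begin

lemma derivation_zero: "D 0 = 0"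
  using derivation_add[of 0 0] by simp

lemma derivation_one: "D 1 = 0"
  using derivation_mult[of 1 1] by simp

lemma derivation_minus: "D (- x) = - D x"
  using derivation_add[of x "- x"] by (simp add: derivation_zero add.commute eq_neg_iff_add_eq_0)

lemma derivation_sum: "D (sum f A) = (\<Sum>a\<in>A. D (f a))"
  by (induct A rule: infinite_finite_induct) (simp_all add: derivation_zero derivation_add)

lemma derivation_prod: "D (prod f A) = (\<Sum>a\<in>A. prod f (A - {a}) * D (f a))"
proof (induct A rule: infinite_finite_induct)
  case (insert a A)
  have "prod f (insert a A - {b}) = f a * prod f (A - {b})" if "b \<in> A" for b
  proof -
    have "insert a A - {b} = insert a (A - {b})" using insert(2) that by auto
    then show ?thesis using insert(1,2) by simp
  qed
  with insert show ?case
    by (simp add: derivation_mult sum_distrib_left algebra_simps cong: sum.cong)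
qed (simp_all add: derivation_one)

lemma derivation_signof: "D (signof p * x) = signof p * D x"
  by (cases p rule: sign_cases) (simp_all add: derivation_minus)

lemma derivation_det:
  assumes M: "M \<in> carrier_mat n n"
  shows "D (det M) = (\<Sum>a<n. det (mat n n (\<lambda>(i,j). if i = a then D (M $$ (i,j)) else M $$ (i,j))))"
proof -
  let ?M = "\<lambda>a. mat n n (\<lambda>(i,j). if i = a then D (M $$ (i,j)) else M $$ (i,j))"
  have row: "(\<Prod>i\<in>{0..<n}. if i = a then D (M $$ (i, p i)) else M $$ (i, p i))
      = (\<Prod>i\<in>{0..<n} - {a}. M $$ (i, p i)) * D (M $$ (a, p a))" if "a < n" for p a
    using that by (subst prod.remove[of _ a]) (auto simp: mult.commute intro!: prod.cong)
  have "D (det M) = (\<Sum>p | p permutes {0..<n}. signof p * (\<Sum>a\<in>{0..<n}. (\<Prod>i\<in>{0..<n} - {a}. M $$ (i, p i)) * D (M $$ (a, p a))))"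
    unfolding det_def'[OF M] derivation_sum derivation_signof derivation_prod ..
  also have "\<dots> = (\<Sum>p | p permutes {0..<n}. \<Sum>a\<in>{0..<n}.
      signof p * (\<Prod>i\<in>{0..<n}. if i = a then D (M $$ (i, p i)) else M $$ (i, p i)))"
    by (auto simp: sum_distrib_left row mult.assoc intro!: sum.cong)
  also have "\<dots> = (\<Sum>a\<in>{0..<n}. det (?M a))"
  proof (subst sum.swap, intro sum.cong refl)
    fix a assume "a \<in> {0..<n}"
    have "(\<Prod>i\<in>{0..<n}. if i = a then D (M $$ (i, p i)) else M $$ (i, p i))
        = (\<Prod>i\<in>{0..<n}. ?M a $$ (i, p i))" if "p permutes {0..<n}" for p
      using that by (auto simp: permutes_in_image intro!: prod.cong)
    then show "(\<Sum>p | p permutes {0..<n}. signof p * (\<Prod>i\<in>{0..<n}. if i = a then D (M $$ (i, p i)) else M $$ (i, p i)))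
        = det (?M a)"
      by (simp add: det_def'[of "?M a" n])
  qed
  finally show ?thesis by (simp add: atLeast0LessThan)
qed

end

interpretation fps_deriv: derivation fps_deriv
  by unfold_locales (simp_all add: mult.commute)

interpretation fps_of_poly: comm_ring_hom fps_of_poly
  by unfold_locales (simp_all add: fps_of_poly_add fps_of_poly_mult)

text \<open>
  Jacobi's formula, over an arbitrary commutative ring: the library's pderiv needs a ring
  without zero divisors, so the derivative is taken in formal power series.
\<close>

lemma fps_deriv_char_poly:
  assumes A: "A \<in> carrier_mat n n"
  shows "fps_deriv (fps_of_poly (char_poly A)) = (\<Sum>i<n. fps_of_poly (adj_mat (char_poly_matrix A) $$ (i,i)))"
proof -
  let ?P = "char_poly_matrix A"
  let ?M = "map_mat fps_of_poly ?P"
  have P: "?P \<in> carrier_mat n n" and M: "?M \<in> carrier_mat n n" using A by auto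
  have "det (mat n n (\<lambda>(i,j). if i = a then fps_deriv (?M $$ (i,j)) else ?M $$ (i,j)))
      = fps_of_poly (adj_mat ?P $$ (a,a))" if a: "a < n" for a
  proof -
    let ?N = "mat n n (\<lambda>(i,j). if i = a then fps_deriv (?M $$ (i,j)) else ?M $$ (i,j))"
    have N: "?N \<in> carrier_mat n n" by simp
    have entry: "?N $$ (a,j) = (if j = a then 1 else 0)" if "j < n" for j
      using a A that by (auto simp: char_poly_matrix_def fps_of_poly_add fps_of_poly_const fps_of_poly_pCons)
    have "det ?N = (\<Sum>j<n. ?N $$ (a,j) * cofactor ?N a j)"
      by (rule laplace_expansion_row[OF N a])
    also have "\<dots> = (\<Sum>j<n. if j = a then cofactor ?N a a else 0)"
      by (rule sum.cong) (auto simp: entry)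
    also have "\<dots> = cofactor ?N a a"
      using a by simp
    also have "\<dots> = cofactor ?M a a"
      unfolding cofactor_def using P by (auto intro!: arg_cong[of _ _ det] eq_matI simp: mat_delete_def)
    also have "\<dots> = fps_of_poly (cofactor ?P a a)"
    proof -
      have "mat_delete ?M a a = map_mat fps_of_poly (mat_delete ?P a a)"
        using P by (auto intro!: eq_matI simp: mat_delete_def)
      then show ?thesis
        by (simp add: cofactor_def fps_of_poly.hom_mult)
    qed
    also have "\<dots> = fps_of_poly (adj_mat ?P $$ (a,a))"
      using a P by (simp add: adj_mat_def)
    finally show ?thesis .
  qed
  then show ?thesis
    using fps_deriv.derivation_det[OF M] by (simp add: char_poly_def)
qed

section \<open>The trace form of the Cayley-Hamilton theorem\<close>

definition fmat_mult :: "nat \<Rightarrow> (nat \<Rightarrow> nat \<Rightarrow> 'a::semiring_1) \<Rightarrow> (nat \<Rightarrow> nat \<Rightarrow> 'a) \<Rightarrow> nat \<Rightarrow> nat \<Rightarrow> 'a" where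
  "fmat_mult n X Y = (\<lambda>i j. \<Sum>k<n. X i k * Y k j)"

fun fmat_pow :: "nat \<Rightarrow> (nat \<Rightarrow> nat \<Rightarrow> 'a::semiring_1) \<Rightarrow> nat \<Rightarrow> nat \<Rightarrow> nat \<Rightarrow> 'a" where
  "fmat_pow n X 0 = (\<lambda>i j. if i = j then 1 else 0)"
| "fmat_pow n X (Suc k) = fmat_mult n X (fmat_pow n X k)"

definition fmat_trace :: "nat \<Rightarrow> (nat \<Rightarrow> nat \<Rightarrow> 'a::comm_monoid_add) \<Rightarrow> 'a" where
  "fmat_trace n X = (\<Sum>i<n. X i i)"

lemma fmat_mult_assoc: "fmat_mult n X (fmat_mult n Y Z) i j = fmat_mult n (fmat_mult n X Y) Z i j"
  unfolding fmat_mult_def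
  by (simp add: sum_distrib_left sum_distrib_right mult.assoc) (rule sum.swap)

lemma fmat_pow_add:
  "i < n \<Longrightarrow> fmat_pow n X (a + b) i j = fmat_mult n (fmat_pow n X a) (fmat_pow n X b) i j"
proof (induction a arbitrary: i j)
  case 0
  have "(\<Sum>k<n. (if i = k then 1 else 0) * fmat_pow n X b k j) = (\<Sum>k<n. if i = k then fmat_pow n X b k j else 0)"
    by (rule sum.cong) auto
  with 0 show ?case by (simp add: fmat_mult_def)
next
  case (Suc a)
  then have "fmat_pow n X (Suc a + b) i j = fmat_mult n X (fmat_mult n (fmat_pow n X a) (fmat_pow n X b)) i j"
    by (simp add: fmat_mult_def)
  then show ?case by (simp add: fmat_mult_assoc)
qed

lemma (in semiring_hom) hom_fmat_pow:
  "hom (fmat_pow n X k i j) = fmat_pow n (\<lambda>i j. hom (X i j)) k i j"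
  by (induction k arbitrary: i j) (simp_all add: fmat_mult_def hom_distribs)

definition char_adj_coeff :: "'a::comm_ring_1 mat \<Rightarrow> nat \<Rightarrow> nat \<Rightarrow> nat \<Rightarrow> 'a" where
  "char_adj_coeff A m i j = coeff (adj_mat (char_poly_matrix A) $$ (i,j)) m"

lemma char_poly_matrix_mult_adj:
  assumes A: "A \<in> carrier_mat n n" and ij: "i < n" "j < n"
  shows "(\<Sum>k<n. [:- A $$ (i,k), if i = k then 1 else 0:] * adj_mat (char_poly_matrix A) $$ (k,j))
    = (if i = j then char_poly A else 0)"
proof -
  let ?P = "char_poly_matrix A"
  have P: "?P \<in> carrier_mat n n" using A by simp
  have Q: "adj_mat ?P \<in> carrier_mat n n" using adj_mat(1)[OF P] .
  have "(\<Sum>k<n. [:- A $$ (i,k), if i = k then 1 else 0:] * adj_mat ?P $$ (k,j))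
      = (\<Sum>k<n. ?P $$ (i,k) * adj_mat ?P $$ (k,j))"
    using ij A by (auto simp: char_poly_matrix_def intro!: sum.cong)
  also have "\<dots> = (?P * adj_mat ?P) $$ (i,j)"
    using ij P Q by (auto simp: scalar_prod_def atLeast0LessThan intro!: sum.cong)
  also have "\<dots> = (if i = j then char_poly A else 0)"
    using adj_mat(2)[OF P] ij by (simp add: char_poly_def)
  finally show ?thesis .
qed

lemma char_adj_coeff_Suc:
  assumes A: "A \<in> carrier_mat n n" and ij: "i < n" "j < n"
  shows "char_adj_coeff A m i j
    = (\<Sum>k<n. A $$ (i,k) * char_adj_coeff A (Suc m) k j) + (if i = j then coeff (char_poly A) (Suc m) else 0)"
proof -
  have "(if i = j then coeff (char_poly A) (Suc m) else 0)
      = (\<Sum>k<n. coeff ([:- A $$ (i,k), if i = k then 1 else 0:] * adj_mat (char_poly_matrix A) $$ (k,j)) (Suc m))"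
    using arg_cong[OF char_poly_matrix_mult_adj[OF A ij], of "\<lambda>p. coeff p (Suc m)"]
    by (simp add: coeff_sum)
  also have "\<dots> = (\<Sum>k<n. - (A $$ (i,k) * char_adj_coeff A (Suc m) k j) + (if i = k then char_adj_coeff A m k j else 0))"
    by (intro sum.cong) (simp_all add: char_adj_coeff_def algebra_simps)
  also have "\<dots> = - (\<Sum>k<n. A $$ (i,k) * char_adj_coeff A (Suc m) k j) + char_adj_coeff A m i j"
    using ij by (simp add: sum_subtractf sum.delta')
  finally show ?thesis by (simp add: algebra_simps)
qed

lemma char_adj_coeff_0:
  assumes A: "A \<in> carrier_mat n n" and ij: "i < n" "j < n"
  shows "(\<Sum>k<n. A $$ (i,k) * char_adj_coeff A 0 k j) = - (if i = j then coeff (char_poly A) 0 else 0)"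
proof -
  have "(if i = j then coeff (char_poly A) 0 else 0)
      = (\<Sum>k<n. coeff ([:- A $$ (i,k), if i = k then 1 else 0:] * adj_mat (char_poly_matrix A) $$ (k,j)) 0)"
    using arg_cong[OF char_poly_matrix_mult_adj[OF A ij], of "\<lambda>p. coeff p 0"]
    by (simp add: coeff_sum)
  also have "\<dots> = - (\<Sum>k<n. A $$ (i,k) * char_adj_coeff A 0 k j)"
    by (simp add: char_adj_coeff_def sum_negf)
  finally show ?thesis by simp
qed

lemma char_adj_coeff_eq_0:
  assumes A: "A \<in> carrier_mat n n" and ij: "i < n" "j < n" and m: "n \<le> m"
  shows "char_adj_coeff A m i j = 0"
proof -
  let ?P = "char_poly_matrix A"
  have "degree (det (mat_delete ?P j i)) \<le> 1 * (n - 1)"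
    by (rule degree_det_le) (use A ij in \<open>auto simp: mat_delete_def char_poly_matrix_def\<close>)
  moreover have "degree ((- 1 :: 'a poly) ^ (j + i)) = 0"
    using degree_power_le[of "- 1 :: 'a poly" "j + i"] by simp
  ultimately have "degree (adj_mat ?P $$ (i,j)) < m"
    using char_poly_matrix_closed[OF A] ij m degree_mult_le[of "(-1) ^ (j + i)" "det (mat_delete ?P j i)"]
    by (simp add: adj_mat_def cofactor_def)
  then show ?thesis
    by (simp add: char_adj_coeff_def coeff_eq_0)
qed

lemma char_adj_coeff_trace:
  assumes A: "A \<in> carrier_mat n n"
  shows "of_nat (Suc m) * coeff (char_poly A) (Suc m) = (\<Sum>i<n. char_adj_coeff A m i i)"
  using arg_cong[OF fps_deriv_char_poly[OF A], of "\<lambda>f. fps_nth f m"]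
  by (simp add: fps_sum_nth char_adj_coeff_def)

text \<open>
  The Faddeev-LeVerrier recursion: when the traces of A, ..., A^(n-1) vanish, the
  coefficients of adj(xI - A) are powers of A and all middle coefficients of \<chi> vanish.
\<close>

lemma char_adj_coeff_eq_fmat_pow:
  fixes d :: "nat \<Rightarrow> nat \<Rightarrow> 'a::comm_ring_1"
  assumes torsion_free: "\<And>k (x::'a). 0 < k \<Longrightarrow> of_nat k * x = 0 \<Longrightarrow> x = 0"
    and trace_zero: "\<And>k. 1 \<le> k \<Longrightarrow> k < n \<Longrightarrow> fmat_trace n (fmat_pow n d k) = 0"
    and m: "m < n" and ij: "i < n" "j < n"
  shows "char_adj_coeff (mat n n (\<lambda>(i,j). d i j)) m i j = fmat_pow n d (n - 1 - m) i j"
proof -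
  let ?A = "mat n n (\<lambda>(i,j). d i j)"
  have A: "?A \<in> carrier_mat n n" by simp
  let ?c = "\<lambda>m. coeff (char_poly ?A) m"
  have recursion: "char_adj_coeff ?A m i j = fmat_pow n d (Suc k) i j + (if i = j then ?c (Suc m) else 0)"
    if "\<forall>i<n. \<forall>j<n. char_adj_coeff ?A (Suc m) i j = fmat_pow n d k i j" "i < n" "j < n" for m k i j
    using that by (simp add: char_adj_coeff_Suc[OF A] fmat_mult_def)
  from m have "m \<le> n - 1" by simp
  then have "\<forall>i<n. \<forall>j<n. char_adj_coeff ?A m i j = fmat_pow n d (n - 1 - m) i j"
  proof (induction m rule: inc_induct)
    case base
    have n: "Suc (n - 1) = n" using m by simp
    show ?case
      using char_adj_coeff_Suc[OF A, of _ _ "n - 1"] char_adj_coeff_eq_0[OF A] degree_monic_char_poly[OF A]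
      unfolding n by simp
  next
    case (step m)
    let ?k = "n - 1 - Suc m"
    have eq: "char_adj_coeff ?A m i j = fmat_pow n d (Suc ?k) i j + (if i = j then ?c (Suc m) else 0)"
      if "i < n" "j < n" for i j
      using step.IH that by (rule recursion)
    have "of_nat (Suc m) * ?c (Suc m) = (\<Sum>i<n. fmat_pow n d (Suc ?k) i i + ?c (Suc m))"
      unfolding char_adj_coeff_trace[OF A] by (intro sum.cong) (simp_all add: eq)
    also have "\<dots> = of_nat n * ?c (Suc m)"
      using step.hyps trace_zero[of "Suc ?k"] by (simp add: sum.distrib fmat_trace_def)
    finally have "of_nat (n - Suc m) * ?c (Suc m) = 0"
      using step.hyps by (simp add: of_nat_diff algebra_simps)
    then show ?case
      using step.hyps torsion_free[of "n - Suc m"] eq by (simp add: Suc_diff_Suc)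
  qed
  with ij show ?thesis by blast
qed

theorem fmat_trace_cayley_hamilton:
  fixes d :: "nat \<Rightarrow> nat \<Rightarrow> 'a::comm_ring_1"
  assumes torsion_free: "\<And>k (x::'a). 0 < k \<Longrightarrow> of_nat k * x = 0 \<Longrightarrow> x = 0"
    and trace_zero: "\<And>k. 1 \<le> k \<Longrightarrow> k < n \<Longrightarrow> fmat_trace n (fmat_pow n d k) = 0"
    and ij: "i < n" "j < n"
  shows "of_nat n * fmat_pow n d n i j = (if i = j then fmat_trace n (fmat_pow n d n) else 0)"
proof -
  let ?A = "mat n n (\<lambda>(i,j). d i j)"
  have A: "?A \<in> carrier_mat n n" by simp
  have pow: "fmat_pow n d n i j = - (if i = j then coeff (char_poly ?A) 0 else 0)"
    if "i < n" "j < n" for i j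
  proof -
    have "fmat_pow n d n i j = (\<Sum>k<n. ?A $$ (i,k) * char_adj_coeff ?A 0 k j)"
      using that char_adj_coeff_eq_fmat_pow[OF torsion_free trace_zero, where m = 0]
      by (cases n) (simp_all add: fmat_mult_def)
    then show ?thesis
      using char_adj_coeff_0[OF A that] by simp
  qed
  have "fmat_trace n (fmat_pow n d n) = - of_nat n * coeff (char_poly ?A) 0"
    by (simp add: fmat_trace_def pow)
  with pow[OF ij] show ?thesis by simp
qed

section \<open>The Grassmann algebra\<close>

definition ninv :: "nat set \<Rightarrow> nat set \<Rightarrow> nat" where
  "ninv S T = card {(s,t). s \<in> S \<and> t \<in> T \<and> t < s}"

lemma gsign_eq_power_ninv: "gsign S T = (-1) ^ ninv S T"
  unfolding gsign_def ninv_def by (simp add: minus_one_power_iff)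

lemma finite_inversions: "finite S \<Longrightarrow> finite T \<Longrightarrow> finite {(s,t). s \<in> S \<and> t \<in> T \<and> t < s}"
  by (rule finite_subset[of _ "S \<times> T"]) auto

lemma ninv_Un_left:
  assumes "finite S" "finite T" "finite W" "S \<inter> T = {}"
  shows "ninv (S \<union> T) W = ninv S W + ninv T W"
proof -
  have "{(s,t). s \<in> S \<union> T \<and> t \<in> W \<and> t < s} =
      {(s,t). s \<in> S \<and> t \<in> W \<and> t < s} \<union> {(s,t). s \<in> T \<and> t \<in> W \<and> t < s}" by auto
  then show ?thesis unfolding ninv_def using assms
    by (simp add: card_Un_disjoint finite_inversions disjoint_iff)
qed

lemma ninv_Un_right:
  assumes "finite S" "finite T" "finite W" "T \<inter> W = {}"
  shows "ninv S (T \<union> W) = ninv S T + ninv S W"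
proof -
  have "{(s,t). s \<in> S \<and> t \<in> T \<union> W \<and> t < s} =
      {(s,t). s \<in> S \<and> t \<in> T \<and> t < s} \<union> {(s,t). s \<in> S \<and> t \<in> W \<and> t < s}" by auto
  then show ?thesis unfolding ninv_def using assms
    by (simp add: card_Un_disjoint finite_inversions disjoint_iff)
qed

lemma ninv_add_ninv_swap:
  assumes "finite S" "finite T" "S \<inter> T = {}"
  shows "ninv S T + ninv T S = card S * card T"
proof -
  have split: "S \<times> T = {(s,t). s \<in> S \<and> t \<in> T \<and> t < s} \<union> (\<lambda>(t,s). (s,t)) ` {(t,s). t \<in> T \<and> s \<in> S \<and> s < t}"
    using assms by (auto simp: image_iff)
  have "card (S \<times> T) = ninv S T + ninv T S"
    unfolding split ninv_def using assms
    by (subst card_Un_disjoint) (auto simp: finite_inversions card_image[OF swap_inj_on])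
  then show ?thesis by (simp add: card_cartesian_product)
qed

lemma gsign_assoc:
  assumes "finite R" "finite T" "finite W" "R \<inter> T = {}" "R \<inter> W = {}" "T \<inter> W = {}"
  shows "(gsign (R \<union> T) W * gsign R T :: 'a::comm_ring_1) = gsign R (T \<union> W) * gsign T W"
  unfolding gsign_eq_power_ninv
  using assms by (simp add: ninv_Un_left ninv_Un_right power_add[symmetric] add_ac)

lemma gsign_swap:
  assumes "finite S" "finite T" "S \<inter> T = {}"
  shows "(gsign S T :: 'a::comm_ring_1) = (-1) ^ (card S * card T) * gsign T S"
proof -
  have "(-1::'a) ^ (card S * card T) * gsign T S = (-1) ^ ninv S T * ((-1) ^ ninv T S * (-1) ^ ninv T S)"
    unfolding gsign_eq_power_ninv ninv_add_ninv_swap[OF assms, symmetric] by (simp add: power_add mult_ac)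
  also have "(-1::'a) ^ ninv T S * (-1) ^ ninv T S = 1"
    by (simp flip: power_add mult_2)
  finally show ?thesis by (simp add: gsign_eq_power_ninv)
qed

lemma gsign_empty_left [simp]: "gsign {} U = 1"
  unfolding gsign_def by simp

lemma gsign_empty_right [simp]: "gsign U {} = 1"
  unfolding gsign_def by simp

lemma gsign_mult_self: "gsign S T * gsign S T = (1::'a::comm_ring_1)"
  unfolding gsign_def by simp

lemma gmult_infinite: "infinite U \<Longrightarrow> gmult f g U = 0"
  unfolding gmult_def by (simp flip: Pow_def)

lemma gmult_assoc:
  fixes f g h :: "'a::comm_ring_1 grass"
  shows "gmult (gmult f g) h = gmult f (gmult g h)"
proof
  fix U
  show "gmult (gmult f g) h U = gmult f (gmult g h) U"
  proof (cases "finite U")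
    case False
    then show ?thesis by (simp add: gmult_infinite)
  next
    case fin: True
    let ?F = "\<lambda>R T. gsign R (U - R) * gsign T (U - R - T) * f R * g T * h (U - R - T)"
    have "gmult (gmult f g) h U = (\<Sum>(S,R)\<in>Sigma (Pow U) Pow.
        gsign S (U - S) * gsign R (S - R) * f R * g (S - R) * h (U - S))"
      using fin unfolding gmult_def Pow_def
      by (simp add: sum.Sigma[symmetric] finite_subset sum_distrib_left sum_distrib_right mult_ac)
    also have "\<dots> = (\<Sum>(R,T)\<in>Sigma (Pow U) (\<lambda>R. Pow (U - R)). ?F R T)"
    proof (rule sum.reindex_bij_witness[where i = "\<lambda>(R,T). (R \<union> T, R)" and j = "\<lambda>(S,R). (R, S - R)"])
      fix b assume "b \<in> Sigma (Pow U) Pow"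
      then obtain S R where b: "b = (S,R)" "S \<subseteq> U" "R \<subseteq> S" by auto
      have "finite R" "finite (S - R)" "finite (U - S)" using b fin by (auto intro: finite_subset)
      then have "gsign (R \<union> (S - R)) (U - S) * gsign R (S - R) = (gsign R ((S - R) \<union> (U - S)) * gsign (S - R) (U - S) :: 'a)"
        using b by (intro gsign_assoc) auto
      moreover have "R \<union> (S - R) = S" "(S - R) \<union> (U - S) = U - R" "U - R - (S - R) = U - S" using b by auto
      ultimately show "(case (case b of (S, R) \<Rightarrow> (R, S - R)) of (R, T) \<Rightarrow> ?F R T) =
          (case b of (S, R) \<Rightarrow> gsign S (U - S) * gsign R (S - R) * f R * g (S - R) * h (U - S))"
        using b by (simp add: mult_ac)
    qed auto
    also have "\<dots> = gmult f (gmult g h) U"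
      using fin unfolding gmult_def Pow_def
      by (simp add: sum.Sigma[symmetric] finite_subset sum_distrib_left sum_distrib_right mult_ac)
    finally show ?thesis .
  qed
qed

lemma grass_zero [simp]: "grass (\<lambda>_. 0)"
  by (simp add: grass_def)

lemma grass_one [simp]: "grass (\<lambda>U. if U = {} then 1 else 0)"
  by (simp add: grass_def)

lemma grass_add [simp]:
  assumes "grass f" "grass g"
  shows "grass (\<lambda>U. f U + g U :: 'a::comm_ring_1)"
proof -
  have "{S. f S + g S \<noteq> 0} \<subseteq> {S. f S \<noteq> 0} \<union> {S. g S \<noteq> 0}" by auto
  moreover have "f S \<noteq> 0 \<or> g S \<noteq> 0" if "f S + g S \<noteq> 0" for S using that by auto
  ultimately show ?thesis
    using assms unfolding grass_def by (meson finite_UnI finite_subset)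
qed

lemma grass_uminus [simp]: "grass f \<Longrightarrow> grass (\<lambda>U. - f U :: 'a::ring_1)"
  unfolding grass_def by auto

lemma gmult_nonzero:
  assumes "gmult f g U \<noteq> 0"
  obtains S where "S \<subseteq> U" "f S \<noteq> 0" "g (U - S) \<noteq> 0"
proof -
  from assms obtain S where "S \<in> {S. S \<subseteq> U}" "gsign S (U - S) * f S * g (U - S) \<noteq> 0"
    unfolding gmult_def by (rule sum.not_neutral_contains_not_neutral)
  then show ?thesis by (metis that mem_Collect_eq mult_zero_left mult_zero_right)
qed

lemma grass_gmult [simp]:
  assumes f: "grass f" and g: "grass g"
  shows "grass (gmult f g)"
proof -
  have "{U. gmult f g U \<noteq> 0} \<subseteq> (\<lambda>(S,T). S \<union> T) ` ({S. f S \<noteq> 0} \<times> {T. g T \<noteq> 0})"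
  proof
    fix U assume "U \<in> {U. gmult f g U \<noteq> 0}"
    then obtain S where "S \<subseteq> U" "f S \<noteq> 0" "g (U - S) \<noteq> 0" using gmult_nonzero by blast
    then show "U \<in> (\<lambda>(S,T). S \<union> T) ` ({S. f S \<noteq> 0} \<times> {T. g T \<noteq> 0})"
      by (auto intro!: image_eqI[of _ _ "(S, U - S)"])
  qed
  moreover have "finite ((\<lambda>(S,T). S \<union> T) ` ({S. f S \<noteq> 0} \<times> {T. g T \<noteq> 0}))"
    using f g unfolding grass_def by simp
  moreover have "finite U" if "gmult f g U \<noteq> 0" for U
    using that gmult_infinite by blast
  ultimately show ?thesis
    unfolding grass_def by (meson finite_subset)
qed

lemma gmult_add_left: "gmult (\<lambda>U. f U + g U) h = (\<lambda>U. gmult f h U + gmult g h U)"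
  unfolding gmult_def by (simp add: sum.distrib algebra_simps)

lemma gmult_add_right: "gmult h (\<lambda>U. f U + g U) = (\<lambda>U. gmult h f U + gmult h g U)"
  unfolding gmult_def by (simp add: sum.distrib algebra_simps)

lemma gmult_scalar_left:
  assumes "grass (f :: 'a::comm_ring_1 grass)"
  shows "gmult (\<lambda>U. if U = {} then c else 0) f = (\<lambda>U. c * f U)"
proof
  fix U
  show "gmult (\<lambda>U. if U = {} then c else 0) f U = c * f U"
  proof (cases "finite U")
    case False
    then have "f U = 0" using assms unfolding grass_def by blast
    with False show ?thesis by (simp add: gmult_infinite)
  next
    case True
    have "gmult (\<lambda>U. if U = {} then c else 0) f U = (\<Sum>S\<in>Pow U. if {} = S then c * f (U - S) else 0)"
      unfolding gmult_def Pow_def by (rule sum.cong) auto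
    also have "\<dots> = c * f U" using True by simp
    finally show ?thesis .
  qed
qed

lemma gmult_one_right:
  assumes "grass (f :: 'a::comm_ring_1 grass)"
  shows "gmult f (\<lambda>U. if U = {} then 1 else 0) = f"
proof
  fix U
  show "gmult f (\<lambda>U. if U = {} then 1 else 0) U = f U"
  proof (cases "finite U")
    case False
    then have "f U = 0" using assms unfolding grass_def by blast
    with False show ?thesis by (simp add: gmult_infinite)
  next
    case True
    have "gmult f (\<lambda>U. if U = {} then 1 else 0) U = (\<Sum>S\<in>Pow U. if U = S then f S else 0)"
      unfolding gmult_def Pow_def by (rule sum.cong) auto
    also have "\<dots> = f U" using True by simp
    finally show ?thesis .
  qed
qed

typedef (overloaded) ('a::comm_ring_1) grassmann = "{f::'a grass. grass f}"
  morphisms gcoeff Grassmann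
  by (rule exI[of _ "\<lambda>_. 0"]) simp

lemma grass_gcoeff [simp]: "grass (gcoeff x)"
  using gcoeff by simp

lemma gcoeff_Grassmann [simp]: "grass f \<Longrightarrow> gcoeff (Grassmann f) = f"
  by (simp add: Grassmann_inverse)

lemma grassmann_eqI: "(\<And>U. gcoeff x U = gcoeff y U) \<Longrightarrow> x = y"
  by (metis gcoeff_inverse ext)

instantiation grassmann :: (comm_ring_1) ring_1
begin

definition "0 = Grassmann (\<lambda>_. 0)"
definition "1 = Grassmann (\<lambda>U. if U = {} then 1 else 0)"
definition "x + y = Grassmann (\<lambda>U. gcoeff x U + gcoeff y U)"
definition "- x = Grassmann (\<lambda>U. - gcoeff x U)"
definition "x - y = x + - (y :: 'a grassmann)"
definition "x * y = Grassmann (gmult (gcoeff x) (gcoeff y))"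

lemma gcoeff_zero [simp]: "gcoeff (0::'a grassmann) = (\<lambda>_. 0)"
  unfolding zero_grassmann_def by simp

lemma gcoeff_one [simp]: "gcoeff (1::'a grassmann) = (\<lambda>U. if U = {} then 1 else 0)"
  unfolding one_grassmann_def by simp

lemma gcoeff_add [simp]: "gcoeff (x + y) = (\<lambda>U. gcoeff x U + gcoeff y U)"
  unfolding plus_grassmann_def by simp

lemma gcoeff_uminus [simp]: "gcoeff (- x) = (\<lambda>U. - gcoeff x U)"
  unfolding uminus_grassmann_def by simp

lemma gcoeff_mult: "gcoeff (x * y) = gmult (gcoeff x) (gcoeff y)"
  unfolding times_grassmann_def by simp

instance
proof
  fix a b c :: "'a grassmann"
  show "a * b * c = a * (b * c)" by (simp add: gcoeff_mult gmult_assoc grassmann_eqI)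
  show "a + b + c = a + (b + c)" by (simp add: grassmann_eqI add.assoc)
  show "a + b = b + a" by (simp add: grassmann_eqI add.commute)
  show "0 + a = a" by (simp add: grassmann_eqI)
  show "- a + a = 0" by (simp add: grassmann_eqI)
  show "a - b = a + - b" by (simp add: minus_grassmann_def)
  show "1 * a = a" by (simp add: grassmann_eqI gcoeff_mult gmult_scalar_left)
  show "a * 1 = a" by (simp add: grassmann_eqI gcoeff_mult gmult_one_right)
  show "(a + b) * c = a * c + b * c" by (simp add: grassmann_eqI gcoeff_mult gmult_add_left)
  show "a * (b + c) = a * b + a * c" by (simp add: grassmann_eqI gcoeff_mult gmult_add_right)
  show "(0::'a grassmann) \<noteq> 1"
  proof
    assume "(0::'a grassmann) = 1"
    then have "gcoeff (0::'a grassmann) {} = gcoeff (1::'a grassmann) {}" by simp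
    then show False by simp
  qed
qed

end

lemma gcoeff_sum: "gcoeff (sum f A) U = (\<Sum>a\<in>A. gcoeff (f a) U)"
  by (induct A rule: infinite_finite_induct) auto

lemma gcoeff_of_nat_mult: "gcoeff (of_nat k * x :: 'a::comm_ring_1 grassmann) U = of_nat k * gcoeff x U"
proof -
  have "gcoeff (of_nat k :: 'a grassmann) = (\<lambda>U. if U = {} then of_nat k else 0)"
    by (induct k) auto
  then show ?thesis by (simp add: gcoeff_mult gmult_scalar_left)
qed

lemma of_nat_mult_grassmann_eq_0:
  fixes x :: "'a::field_char_0 grassmann"
  assumes "0 < k" "of_nat k * x = 0"
  shows "x = 0"
proof (rule grassmann_eqI)
  fix U
  have "of_nat k * gcoeff x U = 0"
    using arg_cong[OF assms(2), of "\<lambda>x. gcoeff x U"] by (simp add: gcoeff_of_nat_mult)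
  then show "gcoeff x U = gcoeff 0 U" using assms(1) by simp
qed

definition homogeneous :: "nat \<Rightarrow> 'a::comm_ring_1 grassmann \<Rightarrow> bool" where
  "homogeneous p x \<longleftrightarrow> (\<forall>S. gcoeff x S \<noteq> 0 \<longrightarrow> even (card S + p))"

lemma gcoeff_nonzero_finite: "gcoeff x S \<noteq> 0 \<Longrightarrow> finite S"
  using grass_gcoeff[of x] unfolding grass_def by blast

lemma gcoeff_mult_nonzero:
  assumes "gcoeff (x * y) U \<noteq> 0"
  obtains S where "finite U" "S \<subseteq> U" "gcoeff x S \<noteq> 0" "gcoeff y (U - S) \<noteq> 0"
  using assms gmult_nonzero[of "gcoeff x" "gcoeff y" U] gmult_infinite
  unfolding gcoeff_mult by metis

lemma homogeneous_two_iff: "homogeneous 2 x \<longleftrightarrow> homogeneous 0 x"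
  by (simp add: homogeneous_def)

lemma homogeneous_zero [simp]: "homogeneous p 0"
  by (simp add: homogeneous_def)

lemma homogeneous_one: "homogeneous 0 1"
  by (simp add: homogeneous_def)

lemma homogeneous_add: "homogeneous p x \<Longrightarrow> homogeneous p y \<Longrightarrow> homogeneous p (x + y)"
  unfolding homogeneous_def by (metis add.right_neutral gcoeff_add)

lemma homogeneous_uminus: "homogeneous p x \<Longrightarrow> homogeneous p (- x)"
  by (simp add: homogeneous_def)

lemma homogeneous_sum: "(\<And>i. i \<in> A \<Longrightarrow> homogeneous p (f i)) \<Longrightarrow> homogeneous p (sum f A)"
  by (induct A rule: infinite_finite_induct) (auto intro: homogeneous_add)

lemma homogeneous_mult:
  assumes x: "homogeneous p x" and y: "homogeneous q y"
  shows "homogeneous (p + q) (x * y)"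
  unfolding homogeneous_def
proof (intro allI impI)
  fix U assume "gcoeff (x * y) U \<noteq> 0"
  then obtain S where S: "finite U" "S \<subseteq> U" "gcoeff x S \<noteq> 0" "gcoeff y (U - S) \<noteq> 0"
    by (rule gcoeff_mult_nonzero)
  then have "card U = card S + card (U - S)"
    by (metis card_Diff_subset card_mono diff_add_inverse finite_subset le_add_diff_inverse)
  then show "even (card U + (p + q))"
    using x y S(3,4) unfolding homogeneous_def by auto
qed

lemma gcoeff_mult_commute_sign:
  assumes "\<And>S T. gcoeff x S \<noteq> 0 \<Longrightarrow> gcoeff y T \<noteq> 0 \<Longrightarrow> S \<inter> T = {} \<Longrightarrow> (-1::'a::comm_ring_1) ^ (card S * card T) = c"
  shows "gcoeff (x * y) U = c * gcoeff (y * x) U"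
proof (cases "finite U")
  case False
  then show ?thesis by (simp add: gcoeff_mult gmult_infinite)
next
  case fin: True
  have "gcoeff (x * y) U = (\<Sum>S\<in>{S. S \<subseteq> U}. gsign S (U - S) * gcoeff x S * gcoeff y (U - S))"
    by (simp add: gcoeff_mult gmult_def)
  also have "\<dots> = (\<Sum>S\<in>{S. S \<subseteq> U}. c * (gsign (U - S) S * gcoeff y (U - S) * gcoeff x S))"
  proof (rule sum.cong[OF refl])
    fix S assume "S \<in> {S. S \<subseteq> U}"
    then have "finite S" "finite (U - S)" "S \<inter> (U - S) = {}"
      using fin finite_subset by auto
    then show "gsign S (U - S) * gcoeff x S * gcoeff y (U - S) = c * (gsign (U - S) S * gcoeff y (U - S) * gcoeff x S)"
    proof (cases "gcoeff x S = 0 \<or> gcoeff y (U - S) = 0")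
      case False
      with \<open>S \<inter> (U - S) = {}\<close> have "c = (-1) ^ (card S * card (U - S))" using assms by simp
      then show ?thesis unfolding gsign_swap[OF \<open>finite S\<close> \<open>finite (U - S)\<close> \<open>S \<inter> (U - S) = {}\<close>]
        by (simp add: mult_ac)
    qed auto
  qed
  also have "\<dots> = c * gcoeff (y * x) U"
    unfolding gcoeff_mult gmult_def sum_distrib_left
    by (rule sum.reindex_bij_witness[where i = "\<lambda>S. U - S" and j = "\<lambda>S. U - S"]) (auto simp: double_diff)
  finally show ?thesis .
qed

lemma even_mult_commute: "homogeneous 0 x \<Longrightarrow> x * y = y * x"
  by (rule grassmann_eqI, rule trans[OF gcoeff_mult_commute_sign[where c = 1]])
    (auto simp: homogeneous_def)

lemma odd_mult_anticommute:
  assumes "homogeneous 1 x" "homogeneous 1 y"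
  shows "x * y = - (y * x)"
proof (rule grassmann_eqI)
  fix U
  have "gcoeff (x * y) U = - 1 * gcoeff (y * x) U"
    by (rule gcoeff_mult_commute_sign) (use assms in \<open>auto simp: homogeneous_def\<close>)
  then show "gcoeff (x * y) U = gcoeff (- (y * x)) U" by simp
qed

section \<open>The even part and fresh generators\<close>

typedef (overloaded) ('a::comm_ring_1) even_grassmann = "{x::'a grassmann. homogeneous 0 x}"
  morphisms of_even Even
  by (rule exI[of _ 0]) simp

lemma homogeneous_of_even [simp]: "homogeneous 0 (of_even x)"
  using of_even by simp

lemma of_even_Even [simp]: "homogeneous 0 x \<Longrightarrow> of_even (Even x) = x"
  by (simp add: Even_inverse)

lemma even_grassmann_eqI: "of_even x = of_even y \<Longrightarrow> x = y"
  by (simp add: of_even_inject)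

instantiation even_grassmann :: (comm_ring_1) comm_ring_1
begin

definition "0 = Even 0"
definition "1 = Even 1"
definition "x + y = Even (of_even x + of_even y)"
definition "- x = Even (- of_even x)"
definition "x - y = x + - (y :: 'a even_grassmann)"
definition "x * y = Even (of_even x * of_even y)"

lemma of_even_zero [simp]: "of_even (0::'a even_grassmann) = 0"
  unfolding zero_even_grassmann_def by simp

lemma of_even_one [simp]: "of_even (1::'a even_grassmann) = 1"
  unfolding one_even_grassmann_def by (simp add: homogeneous_one)

lemma of_even_add [simp]: "of_even (x + y) = of_even x + of_even y"
  unfolding plus_even_grassmann_def by (simp add: homogeneous_add)

lemma of_even_uminus [simp]: "of_even (- x) = - of_even x"
  unfolding uminus_even_grassmann_def by (simp add: homogeneous_uminus)

lemma of_even_mult [simp]: "of_even (x * y) = of_even x * of_even y"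
  unfolding times_even_grassmann_def using homogeneous_mult[of 0 "of_even x" 0 "of_even y"] by simp

instance
proof
  fix a b c :: "'a even_grassmann"
  show "a * b * c = a * (b * c)" by (rule even_grassmann_eqI) (simp add: mult.assoc)
  show "a * b = b * a" by (rule even_grassmann_eqI) (simp add: even_mult_commute)
  show "1 * a = a" by (rule even_grassmann_eqI) simp
  show "(a + b) * c = a * c + b * c" by (rule even_grassmann_eqI) (simp add: distrib_right)
  show "a + b + c = a + (b + c)" by (rule even_grassmann_eqI) (simp add: add.assoc)
  show "a + b = b + a" by (rule even_grassmann_eqI) (simp add: add.commute)
  show "0 + a = a" by (rule even_grassmann_eqI) simp
  show "- a + a = 0" by (rule even_grassmann_eqI) simp
  show "a - b = a + - b" by (simp add: minus_even_grassmann_def)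
  show "(0::'a even_grassmann) \<noteq> 1" by (metis of_even_zero of_even_one zero_neq_one)
qed

end

interpretation of_even: ring_hom of_even
  by unfold_locales simp_all

lemma of_nat_mult_even_grassmann_eq_0:
  fixes x :: "'a::field_char_0 even_grassmann"
  assumes "0 < k" "of_nat k * x = 0"
  shows "x = 0"
  using arg_cong[OF assms(2), of of_even] of_nat_mult_grassmann_eq_0[OF assms(1)]
  by (metis of_even.hom_mult of_even.hom_of_nat of_even_zero even_grassmann_eqI)

definition free_of :: "nat \<Rightarrow> 'a::comm_ring_1 grassmann \<Rightarrow> bool" where
  "free_of m x \<longleftrightarrow> (\<forall>S. gcoeff x S \<noteq> 0 \<longrightarrow> m \<notin> S)"

lemma free_of_zero [simp]: "free_of m 0"
  by (simp add: free_of_def)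

lemma free_of_one [simp]: "free_of m 1"
  by (simp add: free_of_def)

lemma free_of_add: "free_of m x \<Longrightarrow> free_of m y \<Longrightarrow> free_of m (x + y)"
  unfolding free_of_def by (metis add.right_neutral gcoeff_add)

lemma free_of_sum: "(\<And>i. i \<in> A \<Longrightarrow> free_of m (f i)) \<Longrightarrow> free_of m (sum f A)"
  by (induct A rule: infinite_finite_induct) (auto intro: free_of_add)

lemma free_of_mult:
  assumes x: "free_of m x" and y: "free_of m y"
  shows "free_of m (x * y)"
  unfolding free_of_def
proof (intro allI impI)
  fix U assume "gcoeff (x * y) U \<noteq> 0"
  then obtain S where "S \<subseteq> U" "gcoeff x S \<noteq> 0" "gcoeff y (U - S) \<noteq> 0"
    by (rule gcoeff_mult_nonzero)
  with x y show "m \<notin> U" unfolding free_of_def by blast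
qed

lemma free_of_of_nat_mult: "free_of m x \<Longrightarrow> free_of m (of_nat k * x)"
  unfolding free_of_def gcoeff_of_nat_mult by (metis mult_zero_right)

lemma ex_free_of:
  assumes "finite A"
  obtains m where "\<And>x. x \<in> A \<Longrightarrow> free_of m x"
proof -
  have "finite (\<Union>x\<in>A. \<Union>{S. gcoeff x S \<noteq> 0})"
    using assms grass_gcoeff unfolding grass_def by blast
  then obtain m where "m \<notin> (\<Union>x\<in>A. \<Union>{S. gcoeff x S \<noteq> 0})"
    using ex_new_if_finite[OF infinite_UNIV_nat] by blast
  then show ?thesis using that unfolding free_of_def by blast
qed

definition grassmann_gen :: "nat \<Rightarrow> 'a::comm_ring_1 grassmann" where
  "grassmann_gen m = Grassmann (\<lambda>U. if U = {m} then 1 else 0)"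

lemma gcoeff_grassmann_gen: "gcoeff (grassmann_gen m) = (\<lambda>U. if U = {m} then 1 else 0)"
proof -
  have "{U. (if U = {m} then 1 else 0) \<noteq> (0::'a)} = {{m}}" by auto
  then have "grass (\<lambda>U. if U = {m} then 1 else (0::'a))" unfolding grass_def by auto
  then show ?thesis unfolding grassmann_gen_def by simp
qed

lemma homogeneous_grassmann_gen: "homogeneous 1 (grassmann_gen m)"
  by (simp add: homogeneous_def gcoeff_grassmann_gen)

lemma gcoeff_grassmann_gen_mult:
  "gcoeff (grassmann_gen m * y) U = (if finite U \<and> m \<in> U then gsign {m} (U - {m}) * gcoeff y (U - {m}) else 0)"
proof (cases "finite U")
  case True
  have "gcoeff (grassmann_gen m * y) U = (\<Sum>S\<in>Pow U. if {m} = S then gsign S (U - S) * gcoeff y (U - S) else 0)"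
    unfolding gcoeff_mult gmult_def gcoeff_grassmann_gen Pow_def by (rule sum.cong) auto
  then show ?thesis using True by simp
qed (simp add: gcoeff_mult gmult_infinite)

lemma grassmann_gen_mult_self: "grassmann_gen m * grassmann_gen m = 0"
proof (rule grassmann_eqI)
  fix U
  have "U - {m} \<noteq> {m}" by auto
  then show "gcoeff (grassmann_gen m * grassmann_gen m) U = gcoeff 0 U"
    by (simp add: gcoeff_grassmann_gen_mult gcoeff_grassmann_gen)
qed

lemma grassmann_gen_mult_cancel:
  assumes free: "free_of m x" "free_of m y" "free_of m x'" "free_of m y'"
    and eq: "x + grassmann_gen m * y = x' + grassmann_gen m * y'"
  shows "y = y'"
proof (rule grassmann_eqI)
  fix S
  show "gcoeff y S = gcoeff y' S"
  proof (cases "m \<notin> S \<and> finite S")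
    case True
    have "gcoeff x (insert m S) = 0" "gcoeff x' (insert m S) = 0"
      using free unfolding free_of_def by auto
    with True have "gsign {m} S * gcoeff y S = gsign {m} S * gcoeff y' S"
      using arg_cong[OF eq, of "\<lambda>z. gcoeff z (insert m S)"] by (simp add: gcoeff_grassmann_gen_mult)
    then have "gsign {m} S * gsign {m} S * gcoeff y S = gsign {m} S * gsign {m} S * gcoeff y' S"
      by (simp add: mult.assoc)
    then show ?thesis by (simp add: gsign_mult_self)
  next
    case False
    then show ?thesis using free gcoeff_nonzero_finite unfolding free_of_def by metis
  qed
qed

section \<open>Odd matrices over the Grassmann algebra\<close>

lemma homogeneous_fmat_pow:
  assumes "\<And>i j. homogeneous 1 (X i j)"
  shows "homogeneous k (fmat_pow n X k i j)"
proof (induction k arbitrary: i j)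
  case (Suc k)
  then show ?case
    using homogeneous_mult[OF assms] by (auto simp: fmat_mult_def intro!: homogeneous_sum)
qed (simp add: homogeneous_one)

lemma free_of_fmat_pow:
  assumes "\<And>i j. i < n \<Longrightarrow> j < n \<Longrightarrow> free_of m (X i j)" and "i < n" "j < n"
  shows "free_of m (fmat_pow n X k i j)"
  using assms(2,3)
proof (induction k arbitrary: i j)
  case (Suc k)
  then show ?case
    using assms(1) by (auto simp: fmat_mult_def intro!: free_of_sum free_of_mult)
qed simp

lemma fmat_pow_anticommute:
  fixes b :: "nat \<Rightarrow> nat \<Rightarrow> 'a::ring_1"
  assumes anti: "\<And>i j. b i j * t = - (t * b i j)"
  shows "fmat_pow n b k i j * t = (-1) ^ k * (t * fmat_pow n b k i j)"
proof (induction k arbitrary: i j)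
  case (Suc k)
  have "fmat_pow n b (Suc k) i j * t = (\<Sum>l<n. b i l * t * ((-1) ^ k * fmat_pow n b k l j))"
    by (simp add: fmat_mult_def sum_distrib_right mult.assoc Suc.IH)
      (simp add: minus_one_power_iff mult.assoc)
  also have "\<dots> = (-1) ^ Suc k * (t * fmat_pow n b (Suc k) i j)"
    by (simp add: anti fmat_mult_def sum_distrib_left minus_one_power_iff mult.assoc sum_negf)
  finally show ?case .
qed simp

lemma fmat_pow_square_plus_nilpotent:
  fixes b :: "nat \<Rightarrow> nat \<Rightarrow> 'a::ring_1"
  assumes anti: "\<And>i j. b i j * t = - (t * b i j)" and nil: "t * t = 0" and i: "i < n"
  shows "fmat_pow n (\<lambda>i j. fmat_pow n b 2 i j + t * b i j) k i j
    = fmat_pow n b (2 * k) i j + of_nat k * (t * fmat_pow n b (2 * k - 1) i j)"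
  using i
proof (induction k arbitrary: i j)
  case 0
  then show ?case by simp
next
  case (Suc k)
  let ?C = "fmat_pow n b 2"
  have C_commute: "?C i l * t = t * ?C i l" for i l
    using fmat_pow_anticommute[OF anti, where n = n and k = 2] by simp
  have expand: "(?C i l + t * b i l) * (x + of_nat k * (t * y)) = ?C i l * x + t * (b i l * x) + of_nat k * (t * (?C i l * y))"
    for i l x y
  proof -
    have K: "z * (of_nat k * w) = of_nat k * (z * w)" for z w :: 'a
      by (metis mult.assoc mult_of_nat_commute)
    have "?C i l * (of_nat k * (t * y)) = of_nat k * (t * (?C i l * y))"
      by (simp only: K) (simp add: C_commute flip: mult.assoc)
    moreover have "t * b i l * (t * y) = t * (b i l * t) * y"
      by (simp add: mult.assoc)
    then have "t * b i l * (of_nat k * (t * y)) = 0"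
      by (simp only: K) (simp add: anti nil flip: mult.assoc)
    ultimately show ?thesis by (simp add: distrib_left distrib_right mult.assoc)
  qed
  have odd_power: "fmat_mult n ?C (fmat_pow n b (2 * k - 1)) i j = fmat_pow n b (2 * Suc k - 1) i j" if "0 < k"
    using fmat_pow_add[OF Suc.prems, of b 2 "2 * k - 1"] that by (simp add: numeral_2_eq_2)
  have "fmat_pow n (\<lambda>i j. ?C i j + t * b i j) (Suc k) i j
      = (\<Sum>l<n. (?C i l + t * b i l) * (fmat_pow n b (2 * k) l j + of_nat k * (t * fmat_pow n b (2 * k - 1) l j)))"
    by (simp add: fmat_mult_def Suc.IH)
  also have "\<dots> = fmat_mult n ?C (fmat_pow n b (2 * k)) i j + t * fmat_mult n b (fmat_pow n b (2 * k)) i j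
      + of_nat k * (t * fmat_mult n ?C (fmat_pow n b (2 * k - 1)) i j)"
    by (simp add: expand fmat_mult_def sum.distrib sum_distrib_left)
  also have "\<dots> = fmat_pow n b (2 * Suc k) i j + of_nat (Suc k) * (t * fmat_pow n b (2 * Suc k - 1) i j)"
    using fmat_pow_add[OF Suc.prems, of b 2 "2 * k"] odd_power
    by (cases "k = 0") (simp_all add: algebra_simps)
  finally show ?case .
qed

lemma of_even_fmat_pow_square_plus_gen:
  fixes b :: "nat \<Rightarrow> nat \<Rightarrow> 'a::comm_ring_1 grassmann"
  assumes odd: "\<And>i j. homogeneous 1 (b i j)" and i: "i < n"
  shows "of_even (fmat_pow n (\<lambda>i j. Even (fmat_pow n b 2 i j + grassmann_gen m * b i j)) k i j)
    = fmat_pow n b (2 * k) i j + of_nat k * (grassmann_gen m * fmat_pow n b (2 * k - 1) i j)"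
proof -
  have "homogeneous 2 (fmat_pow n b 2 i j)" for i j
    using homogeneous_fmat_pow[where X = b, OF odd] .
  moreover have "homogeneous 2 (grassmann_gen m * b i j)" for i j
    using homogeneous_mult[OF homogeneous_grassmann_gen odd, of m i j] unfolding one_add_one .
  ultimately have even: "homogeneous 0 (fmat_pow n b 2 i j + grassmann_gen m * b i j)" for i j
    unfolding homogeneous_two_iff by (simp add: homogeneous_add)
  have anti: "b i j * grassmann_gen m = - (grassmann_gen m * b i j)" for i j
    by (rule odd_mult_anticommute[OF odd homogeneous_grassmann_gen])
  show ?thesis
    using fmat_pow_square_plus_nilpotent[OF anti grassmann_gen_mult_self i]
    by (simp add: of_even.hom_fmat_pow even)
qed

lemma odd_fmat_trace_identity:
  fixes b :: "nat \<Rightarrow> nat \<Rightarrow> 'a::field_char_0 grassmann"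
  assumes odd: "\<And>i j. homogeneous 1 (b i j)"
    and trace_zero: "\<And>t. 1 \<le> t \<Longrightarrow> t \<le> 2 * n - 2 \<Longrightarrow> fmat_trace n (fmat_pow n b t) = 0"
    and ij: "i < n" "j < n"
  shows "of_nat n * fmat_pow n b (2 * n - 1) i j = (if i = j then fmat_trace n (fmat_pow n b (2 * n - 1)) else 0)"
proof -
  have "finite ((\<lambda>(i,j). b i j) ` ({..<n} \<times> {..<n}))" by simp
  then obtain m where "\<And>x. x \<in> (\<lambda>(i,j). b i j) ` ({..<n} \<times> {..<n}) \<Longrightarrow> free_of m x"
    by (rule ex_free_of) blast
  then have free: "\<And>i j. i < n \<Longrightarrow> j < n \<Longrightarrow> free_of m (b i j)"
    by auto
  define \<theta> where "\<theta> = (grassmann_gen m :: 'a grassmann)"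
  define D where "D i j = Even (fmat_pow n b 2 i j + \<theta> * b i j)" for i j
  have pow_D: "of_even (fmat_pow n D k i j)
      = fmat_pow n b (2 * k) i j + of_nat k * (\<theta> * fmat_pow n b (2 * k - 1) i j)" if "i < n" for k i j
    unfolding D_def \<theta>_def by (rule of_even_fmat_pow_square_plus_gen[OF odd that])
  have trace_D: "of_even (fmat_trace n (fmat_pow n D k))
      = fmat_trace n (fmat_pow n b (2 * k)) + of_nat k * (\<theta> * fmat_trace n (fmat_pow n b (2 * k - 1)))" for k
    by (simp add: fmat_trace_def of_even.hom_sum pow_D sum.distrib sum_distrib_left)
  let ?P = "fmat_pow n b (2 * n - 1) i j" and ?T = "fmat_trace n (fmat_pow n b (2 * n - 1))"
  let ?P2 = "fmat_pow n b (2 * n) i j" and ?T2 = "fmat_trace n (fmat_pow n b (2 * n))"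
  have CH: "of_nat n * fmat_pow n D n i j = (if i = j then fmat_trace n (fmat_pow n D n) else 0)"
  proof (rule fmat_trace_cayley_hamilton[OF of_nat_mult_even_grassmann_eq_0 _ ij])
    fix k assume "1 \<le> k" "k < n"
    then show "fmat_trace n (fmat_pow n D k) = 0"
      using trace_D[of k] trace_zero[of "2 * k"] trace_zero[of "2 * k - 1"]
      by (simp add: even_grassmann_eqI)
  qed
  have "of_nat n * (?P2 + of_nat n * (\<theta> * ?P)) = (if i = j then ?T2 + of_nat n * (\<theta> * ?T) else 0)"
    using arg_cong[OF CH, of of_even] pow_D[OF ij(1)] trace_D
    by (cases "i = j") (simp_all add: of_even.hom_mult of_even.hom_of_nat)
  moreover have K: "of_nat k * (\<theta> * z) = \<theta> * (of_nat k * z)" for k z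
    by (metis mult.assoc mult_of_nat_commute)
  ultimately have separated: "of_nat n * ?P2 + \<theta> * (of_nat n * (of_nat n * ?P))
      = (if i = j then ?T2 else 0) + \<theta> * (if i = j then of_nat n * ?T else 0)"
    by (cases "i = j") (simp_all add: distrib_left K)
  have "of_nat n * (of_nat n * ?P) = (if i = j then of_nat n * ?T else 0)"
    by (rule grassmann_gen_mult_cancel[OF _ _ _ _ separated[unfolded \<theta>_def]])
      (use free ij in \<open>auto intro!: free_of_of_nat_mult free_of_fmat_pow free_of_sum simp: fmat_trace_def\<close>)
  then have "of_nat n * (of_nat n * ?P - (if i = j then ?T else 0)) = 0"
    by (simp add: right_diff_distrib)
  with ij show ?thesis
    using of_nat_mult_grassmann_eq_0[of n] by fastforce
qed

lemma gcoeff_eq_gzero_iff: "gcoeff x = gzero \<longleftrightarrow> x = 0"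
  by (auto simp: gzero_def fun_eq_iff intro!: grassmann_eqI)

text \<open>Entries outside the n \<times> n block are set to 0, so that hypotheses on all entries hold.\<close>

definition grassmann_mat :: "nat \<Rightarrow> 'a::comm_ring_1 gmat \<Rightarrow> nat \<Rightarrow> nat \<Rightarrow> 'a grassmann" where
  "grassmann_mat n B = (\<lambda>i j. if i < n \<and> j < n then Grassmann (B i j) else 0)"

lemma gmat_pow_eq_gcoeff_fmat_pow:
  assumes grass: "\<And>i j. i < n \<Longrightarrow> j < n \<Longrightarrow> grass (B i j)" and "i < n" "j < n"
  shows "gmat_pow n B t i j = gcoeff (fmat_pow n (grassmann_mat n B) t i j)"
  using assms(2,3)
proof (induction t arbitrary: i j)
  case 0
  then show ?case by (auto simp: gmat_one_def)
next
  case (Suc t)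
  have "gmat_pow n B (Suc t) i j = (\<lambda>U. \<Sum>k<n. gmult (B i k) (gmat_pow n B t k j) U)"
    by (simp add: gmat_mult_def)
  also have "\<dots> = (\<lambda>U. \<Sum>k<n. gcoeff (grassmann_mat n B i k * fmat_pow n (grassmann_mat n B) t k j) U)"
    using Suc by (intro ext sum.cong) (simp_all add: gcoeff_mult grassmann_mat_def grass)
  also have "\<dots> = gcoeff (fmat_pow n (grassmann_mat n B) (Suc t) i j)"
    by (simp add: fmat_mult_def gcoeff_sum fun_eq_iff)
  finally show ?case .
qed

lemma gtrace_gmat_pow_eq_gcoeff:
  assumes "\<And>i j. i < n \<Longrightarrow> j < n \<Longrightarrow> grass (B i j)"
  shows "gtrace n (gmat_pow n B t) = gcoeff (fmat_trace n (fmat_pow n (grassmann_mat n B) t))"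
  by (auto simp: gtrace_def fmat_trace_def gcoeff_sum gmat_pow_eq_gcoeff_fmat_pow[OF assms])

lemma homogeneous_grassmann_mat:
  assumes "\<forall>i<n. \<forall>j<n. grass_odd (B i j)"
  shows "homogeneous 1 (grassmann_mat n B i j)"
proof (cases "i < n \<and> j < n")
  case True
  with assms have "grass_odd (B i j)" by blast
  with True show ?thesis by (simp add: grassmann_mat_def homogeneous_def grass_odd_def)
qed (auto simp: grassmann_mat_def)

lemma gmat_pow_odd_trace_identity:
  fixes B :: "'a::field_char_0 gmat"
  assumes odd: "\<forall>i<n. \<forall>j<n. grass_odd (B i j)"
    and trace_zero: "\<And>t. 1 \<le> t \<Longrightarrow> t \<le> 2*n - 2 \<Longrightarrow> gtrace n (gmat_pow n B t) = gzero"
    and ij: "i < n" "j < n"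
  shows "(\<lambda>U. of_nat n * gmat_pow n B (2*n - 1) i j U) = (if i = j then gtrace n (gmat_pow n B (2*n - 1)) else gzero)"
proof
  fix U
  let ?b = "grassmann_mat n B"
  have grass: "\<And>i j. i < n \<Longrightarrow> j < n \<Longrightarrow> grass (B i j)"
    using odd by (simp add: grass_odd_def)
  have "fmat_trace n (fmat_pow n ?b t) = 0" if "1 \<le> t" "t \<le> 2*n - 2" for t
    using trace_zero[OF that] by (simp add: gtrace_gmat_pow_eq_gcoeff[where B = B, OF grass] gcoeff_eq_gzero_iff)
  then have "of_nat n * fmat_pow n ?b (2*n - 1) i j = (if i = j then fmat_trace n (fmat_pow n ?b (2*n - 1)) else 0)"
    by (rule odd_fmat_trace_identity[OF homogeneous_grassmann_mat[OF odd] _ ij])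
  then have "of_nat n * gcoeff (fmat_pow n ?b (2*n - 1) i j) U
      = gcoeff (if i = j then fmat_trace n (fmat_pow n ?b (2*n - 1)) else 0) U"
    by (simp only: flip: gcoeff_of_nat_mult)
  then show "of_nat n * gmat_pow n B (2*n - 1) i j U = (if i = j then gtrace n (gmat_pow n B (2*n - 1)) else gzero) U"
    by (simp add: gmat_pow_eq_gcoeff_fmat_pow[OF grass ij] gtrace_gmat_pow_eq_gcoeff[OF grass] gzero_def)
qed

theorem corollary2p5:
  fixes B :: "'a::field_char_0 gmat" and n :: nat
  assumes "n \<ge> 2"
    and "\<forall>i<n. \<forall>j<n. grass_odd (B i j)"
    and "\<forall>t. 1 \<le> t \<and> t \<le> 2*n - 2 \<longrightarrow> gtrace n (gmat_pow n B t) = gzero"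
  shows "(\<forall>i<n. \<forall>j<n. (\<lambda>U. of_nat n * gmat_pow n B (2*n - 1) i j U)
            = (if i = j then gtrace n (gmat_pow n B (2*n - 1)) else gzero))
    \<and> (\<exists>c. \<forall>i<n. \<forall>j<n. gmat_pow n B (2*n - 1) i j = (if i = j then c else gzero))
    \<and> (gtrace n (gmat_pow n B (2*n - 1)) = gzero
         \<longrightarrow> (\<forall>i<n. \<forall>j<n. gmat_pow n B (2*n - 1) i j = gzero))"
proof -
  let ?P = "gmat_pow n B (2*n - 1)" and ?T = "gtrace n (gmat_pow n B (2*n - 1))"
  have main: "(\<lambda>U. of_nat n * ?P i j U) = (if i = j then ?T else gzero)" if "i < n" "j < n" for i j
    using gmat_pow_odd_trace_identity[OF assms(2) _ that] assms(3) by blast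
  have "(of_nat n :: 'a) \<noteq> 0" using assms(1) by simp
  then have scalar: "?P i j = (if i = j then (\<lambda>U. ?T U / of_nat n) else gzero)" if "i < n" "j < n" for i j
    using main[OF that] by (auto simp: fun_eq_iff gzero_def field_simps split: if_splits)
  show ?thesis
    using main scalar by (auto simp: gzero_def)
qed

end
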